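(* Let $R$ be a ring, $n \in \mathbb{N}$, and $S_1,\dots,S_n$ sets with $|S_i| \geq \aleph_{i-1}$ for each $i$. For each $i \in [n]$ let \[v_i: \prod_{j \in [n]\setminus\{i\}} S_j \to \mathrm{Hom}^{\mathrm{fin}}_{\mathrm{Set}}\Big(\prod_{j \in [n]} S_j, R\Big)\] be an arbitrary map of sets. Then there exists $s \in \prod_{j \in [n]} S_j$ such that $v_i(p^n_i(s))(s) = 0$ for every $i \in [n]$.
   Context: $[n]=\{1,\dots,n\}$. For a set $T$ and ring $R$, $\mathrm{Hom}^{\mathrm{fin}}_{\mathrm{Set}}(T,R)$ is the set of functions $T \to R$ that vanish outside a finite subset of $T$. For $s = (s_1,\dots,s_n) \in \prod_{j \in [n]} S_j$, $p^n_i(s) = (s_1,\dots,s_{i-1},s_{i+1},\dots,s_n) \in \prod_{j \neq i} S_j$ is the point with the $i$-th coordinate omitted. *)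

theory Defs
  imports Main "HOL-Library.FuncSet"
begin

text \<open>Since \<open>cardSuc\<close> changes the carrier type, the
  alephs are represented by sets realising them:
  \<open>is_aleph k B\<close> means |B| = aleph_k.\<close>

fun is_aleph :: "nat \<Rightarrow> 'a set \<Rightarrow> bool" where
  "is_aleph 0 B = ((card_of B, natLeq) \<in> ordIso)"
| "is_aleph (Suc k) B =
     (\<exists>C :: 'a set. is_aleph k C \<and> (card_of B, cardSuc (card_of C)) \<in> ordIso)"

definition aleph_le :: "nat \<Rightarrow> 'a set \<Rightarrow> bool" where
  "aleph_le k A = (\<exists>B :: 'a set. is_aleph k B \<and> (card_of B, card_of A) \<in> ordLeq)"

end

theory Submission
  imports Defs
begin

text \<open>Taking the finite sets of values forbidden in the \<open>i\<close>-th coordinate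
  (the \<open>i\<close>-th coordinates of the support of \<open>v\<^sub>i(t)\<close>), the theorem is the finite form of
  Kuratowski's free set theorem, proved by induction on \<open>n\<close>.  After shrinking
  \<open>S\<^sub>i\<close> to cardinality exactly \<open>\<aleph>\<^sub>i\<^sub>-\<^sub>1\<close>, the product \<open>S\<^sub>1 \<times> \<dots> \<times> S\<^sub>n\<close> has
  cardinality at most \<open>\<aleph>\<^sub>n\<^sub>-\<^sub>1 < \<aleph>\<^sub>n \<le> |S\<^sub>n\<^sub>+\<^sub>1|\<close>, so the union of the
  finite sets forbidden in the last coordinate by all points of that product
  misses some \<open>c \<in> S\<^sub>n\<^sub>+\<^sub>1\<close>.  Fixing the last coordinate to \<open>c\<close> leaves an
  instance with \<open>n\<close> coordinates.\<close>

unbundle cardinal_syntax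

lemma finite_ordLess_infinite_card_of:
  "finite A \<Longrightarrow> infinite B \<Longrightarrow> |A| <o |B|"
  by (rule finite_ordLess_infinite) (simp_all add: Field_card_of card_of_well_order_on)

lemma ex_not_in_UNION_of_finite:
  assumes "infinite A" and "|P| <o |A|" and "\<And>u. u \<in> P \<Longrightarrow> finite (F u)"
  shows "\<exists>a\<in>A. a \<notin> (\<Union>u\<in>P. F u)"
proof -
  have "|\<Union>u\<in>P. F u| <o |A|"
  proof (cases "finite P")
    case True
    then show ?thesis using assms by (simp add: finite_ordLess_infinite_card_of)
  next
    case False
    have "|F u| \<le>o |P|" if "u \<in> P" for u
      using assms(3)[OF that] False by (simp add: finite_ordLess_infinite_card_of ordLess_imp_ordLeq)
    then have "|\<Union>u\<in>P. F u| \<le>o |P|"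
      using False card_of_mono1[of P P] by (intro card_of_UNION_ordLeq_infinite) auto
    then show ?thesis using assms(2) by (rule ordLeq_ordLess_trans)
  qed
  then have "\<not> A \<subseteq> (\<Union>u\<in>P. F u)"
    using card_of_mono1 not_ordLess_ordLeq by blast
  then show ?thesis by blast
qed

lemma card_of_PiE_ordLeq_infinite:
  assumes "finite I" and "infinite C" and "\<And>i. i \<in> I \<Longrightarrow> |A i| \<le>o |C|"
  shows "|PiE I A| \<le>o |C|"
  using assms
proof (induction I rule: finite_induct)
  case empty
  then show ?case by (simp add: finite_ordLess_infinite_card_of ordLess_imp_ordLeq)
next
  case (insert x I)
  have "|A x \<times> PiE I A| \<le>o |C|"
    using insert card_of_Times_ordLeq_infinite_Field[of "|C|" "A x" "PiE I A"]
    by (simp add: card_of_Card_order card_of_card_order_on Field_card_of)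
  then show ?case
    unfolding PiE_insert_eq using card_of_image ordLeq_transitive by blast
qed

lemma is_aleph_infinite:
  fixes B :: "'a set"
  shows "is_aleph k B \<Longrightarrow> infinite B"
proof (induction k arbitrary: B)
  case 0
  then show ?case using infinite_iff_natLeq_ordLeq ordIso_iff_ordLeq by auto
next
  case (Suc k)
  then obtain C :: "'a set" where C: "is_aleph k C" "|B| =o cardSuc |C|" by auto
  have "|C| \<le>o |B|"
    using cardSuc_greater[OF card_of_Card_order, of C] C(2)
    by (meson ordIso_iff_ordLeq ordLess_imp_ordLeq ordLeq_transitive)
  then show ?case using Suc.IH C(1) card_of_ordLeq_infinite by blast
qed

lemma is_aleph_ordIso:
  fixes B B' :: "'a set"
  shows "is_aleph k B \<Longrightarrow> is_aleph k B' \<Longrightarrow> |B| =o |B'|"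
proof (induction k arbitrary: B B')
  case 0
  then show ?case by simp (meson ordIso_symmetric ordIso_transitive)
next
  case (Suc k)
  then obtain C C' :: "'a set" where C: "is_aleph k C" "|B| =o cardSuc |C|"
    and C': "is_aleph k C'" "|B'| =o cardSuc |C'|" by auto
  have "cardSuc |C| =o cardSuc |C'|"
    using Suc.IH[OF C(1) C'(1)] by (simp add: cardSuc_invar_ordIso card_of_Card_order)
  then show ?case using C(2) C'(2) ordIso_symmetric ordIso_transitive by meson
qed

lemma is_aleph_ordIso_cong:
  fixes B B' :: "'a set"
  assumes "is_aleph k B" and "|B| =o |B'|"
  shows "is_aleph k B'"
proof (cases k)
  case 0
  then show ?thesis using assms ordIso_symmetric ordIso_transitive by fastforce
next
  case (Suc k')
  then obtain C :: "'a set" where "is_aleph k' C" "|B| =o cardSuc |C|" using assms by auto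
  then show ?thesis using Suc assms ordIso_symmetric ordIso_transitive by fastforce
qed

lemma is_aleph_Suc_ordLess:
  fixes B C :: "'a set"
  assumes B: "is_aleph (Suc k) B" and C: "is_aleph k C"
  shows "|C| <o |B|"
proof -
  obtain C' :: "'a set" where C': "is_aleph k C'" "|B| =o cardSuc |C'|" using B by auto
  have "|C| <o cardSuc |C'|"
    by (rule ordIso_ordLess_trans[OF is_aleph_ordIso[OF C C'(1)] cardSuc_greater[OF card_of_Card_order]])
  then show ?thesis by (rule ordLess_ordIso_trans[OF _ ordIso_symmetric[OF C'(2)]])
qed

lemma is_aleph_mono:
  fixes B B' :: "'a set"
  shows "is_aleph k B \<Longrightarrow> is_aleph k' B' \<Longrightarrow> k \<le> k' \<Longrightarrow> |B| \<le>o |B'|"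
proof (induction k' arbitrary: B')
  case 0
  then show ?case using is_aleph_ordIso ordIso_iff_ordLeq by fastforce
next
  case (Suc k')
  show ?case
  proof (cases "k = Suc k'")
    case True
    then show ?thesis using Suc.prems is_aleph_ordIso ordIso_iff_ordLeq by blast
  next
    case False
    from Suc.prems(2) obtain C :: "'a set" where C: "is_aleph k' C" by auto
    have "|B| \<le>o |C|" using Suc.IH[OF Suc.prems(1) C] Suc.prems(3) False by simp
    then show ?thesis
      using is_aleph_Suc_ordLess[OF Suc.prems(2) C] ordLeq_ordLess_trans ordLess_imp_ordLeq
      by blast
  qed
qed

lemma aleph_le_obtains_subset:
  fixes A :: "'a set"
  assumes "aleph_le k A"
  obtains T where "T \<subseteq> A" and "is_aleph k T"
proof -
  obtain B :: "'a set" where B: "is_aleph k B" "|B| \<le>o |A|"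
    using assms unfolding aleph_le_def by blast
  then obtain f where f: "inj_on f B" "f ` B \<subseteq> A"
    unfolding card_of_ordLeq[symmetric] by blast
  have "|B| =o |f ` B|"
    unfolding card_of_ordIso[symmetric] using f(1) by (blast intro: inj_on_imp_bij_betw)
  then show ?thesis by (rule that[OF f(2) is_aleph_ordIso_cong[OF B(1)]])
qed

lemma card_of_PiE_ordLess_aleph:
  fixes S :: "nat \<Rightarrow> 'a set" and B :: "'a set"
  assumes "\<And>j. j \<in> {1..n} \<Longrightarrow> is_aleph (j - 1) (S j)" and "is_aleph n B"
  shows "|PiE {1..n} S| <o |B|"
proof (cases n)
  case 0
  then show ?thesis
    using is_aleph_infinite[OF assms(2)] by (simp add: finite_ordLess_infinite_card_of)
next
  case (Suc m)
  then obtain C :: "'a set" where C: "is_aleph m C" using assms(2) by auto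
  have "|S j| \<le>o |C|" if "j \<in> {1..n}" for j
    using that Suc by (intro is_aleph_mono[OF assms(1)[OF that] C]) auto
  then have "|PiE {1..n} S| \<le>o |C|"
    using is_aleph_infinite[OF C] by (intro card_of_PiE_ordLeq_infinite) auto
  then show ?thesis
    using is_aleph_Suc_ordLess[OF _ C] assms(2) Suc ordLeq_ordLess_trans by blast
qed

lemma kuratowski_free_set:
  fixes S :: "nat \<Rightarrow> 'a set" and F :: "nat \<Rightarrow> (nat \<Rightarrow> 'a) \<Rightarrow> 'a set"
  assumes "\<And>i. i \<in> {1..n} \<Longrightarrow> is_aleph (i - 1) (S i)"
    and "\<And>i t. i \<in> {1..n} \<Longrightarrow> t \<in> PiE ({1..n} - {i}) S \<Longrightarrow> finite (F i t)"
  shows "\<exists>s\<in>PiE {1..n} S. \<forall>i\<in>{1..n}. s i \<notin> F i (restrict s ({1..n} - {i}))"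
  using assms
proof (induction n arbitrary: F)
  case 0
  then show ?case by auto
next
  case (Suc n)
  have last_dom: "{1..Suc n} - {Suc n} = {1..n}" by auto
  have last: "is_aleph n (S (Suc n))" using Suc.prems(1)[of "Suc n"] by simp
  have "\<exists>c\<in>S (Suc n). c \<notin> (\<Union>u\<in>PiE {1..n} S. F (Suc n) u)"
  proof (rule ex_not_in_UNION_of_finite)
    show "infinite (S (Suc n))" using last by (rule is_aleph_infinite)
    show "|PiE {1..n} S| <o |S (Suc n)|"
      using Suc.prems(1) last by (intro card_of_PiE_ordLess_aleph) auto
    show "finite (F (Suc n) u)" if "u \<in> PiE {1..n} S" for u
      using Suc.prems(2)[of "Suc n" u] that last_dom by simp
  qed
  then obtain c where c: "c \<in> S (Suc n)" "\<And>u. u \<in> PiE {1..n} S \<Longrightarrow> c \<notin> F (Suc n) u"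
    by blast
  define F' where "F' i t = F i (t(Suc n := c))" for i t
  have "\<exists>s\<in>PiE {1..n} S. \<forall>i\<in>{1..n}. s i \<notin> F' i (restrict s ({1..n} - {i}))"
  proof (rule Suc.IH)
    fix i t assume i: "i \<in> {1..n}" and t: "t \<in> PiE ({1..n} - {i}) S"
    have "insert (Suc n) ({1..n} - {i}) = {1..Suc n} - {i}" using i by auto
    then have ext: "t(Suc n := c) \<in> PiE ({1..Suc n} - {i}) S" using PiE_fun_upd[OF c(1) t] by simp
    show "finite (F' i t)" unfolding F'_def using i by (intro Suc.prems(2)[OF _ ext]) auto
  qed (use Suc.prems(1) in auto)
  then obtain s where s: "s \<in> PiE {1..n} S"
    and free: "\<And>i. i \<in> {1..n} \<Longrightarrow> s i \<notin> F' i (restrict s ({1..n} - {i}))" by blast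
  have "s(Suc n := c) \<in> PiE {1..Suc n} S"
    using PiE_fun_upd[OF c(1) s] by (simp add: atLeastAtMostSuc_conv)
  moreover have "(s(Suc n := c)) i \<notin> F i (restrict (s(Suc n := c)) ({1..Suc n} - {i}))"
    if i: "i \<in> {1..Suc n}" for i
  proof (cases "i = Suc n")
    case True
    have "restrict (s(Suc n := c)) {1..n} = s"
      using s by (auto simp: PiE_iff extensional_def restrict_def)
    then show ?thesis using True c(2)[OF s] last_dom by simp
  next
    case False
    then have "i \<in> {1..n}" using i by auto
    moreover have "{1..Suc n} - {i} = insert (Suc n) ({1..n} - {i})" using False i by auto
    ultimately show ?thesis using free False by (simp add: F'_def)
  qed
  ultimately show ?case by blast
qed

theorem mainTheorem4:
  fixes n :: nat
    and S :: "nat \<Rightarrow> 'a set"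
    and v :: "nat \<Rightarrow> (nat \<Rightarrow> 'a) \<Rightarrow> ((nat \<Rightarrow> 'a) \<Rightarrow> 'r::ring)"
  assumes card: "\<And>i. i \<in> {1..n} \<Longrightarrow> aleph_le (i - 1) (S i)"
    and fin: "\<And>i t. i \<in> {1..n} \<Longrightarrow> t \<in> (\<Pi>\<^sub>E j\<in>{1..n} - {i}. S j) \<Longrightarrow>
              finite {s \<in> (\<Pi>\<^sub>E j\<in>{1..n}. S j). v i t s \<noteq> 0}"
  shows "\<exists>s \<in> (\<Pi>\<^sub>E j\<in>{1..n}. S j).
           \<forall>i \<in> {1..n}. v i (restrict s ({1..n} - {i})) s = 0"
proof -
  have "\<exists>T. T \<subseteq> S i \<and> is_aleph (i - 1) T" if "i \<in> {1..n}" for i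
    using aleph_le_obtains_subset[OF card[OF that]] by blast
  then obtain T where T: "\<And>i. i \<in> {1..n} \<Longrightarrow> T i \<subseteq> S i \<and> is_aleph (i - 1) (T i)"
    by metis
  have sub: "PiE I T \<subseteq> PiE I S" if "I \<subseteq> {1..n}" for I
    using T that by (intro PiE_mono) blast
  define F where "F i t = (\<lambda>s. s i) ` {s \<in> PiE {1..n} S. v i t s \<noteq> 0}" for i t
  have "\<exists>s\<in>PiE {1..n} T. \<forall>i\<in>{1..n}. s i \<notin> F i (restrict s ({1..n} - {i}))"
  proof (rule kuratowski_free_set)
    show "is_aleph (i - 1) (T i)" if "i \<in> {1..n}" for i
      using T that by blast
    show "finite (F i t)" if "i \<in> {1..n}" "t \<in> PiE ({1..n} - {i}) T" for i t
      using fin[OF that(1)] sub[of "{1..n} - {i}"] that(2) by (auto simp: F_def)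
  qed
  then obtain s where s: "s \<in> PiE {1..n} T"
    and free: "\<forall>i\<in>{1..n}. s i \<notin> F i (restrict s ({1..n} - {i}))" by blast
  have s_S: "s \<in> PiE {1..n} S" using s sub by blast
  moreover have "v i (restrict s ({1..n} - {i})) s = 0" if "i \<in> {1..n}" for i
  proof (rule ccontr)
    assume "v i (restrict s ({1..n} - {i})) s \<noteq> 0"
    then have "s i \<in> F i (restrict s ({1..n} - {i}))" using s_S unfolding F_def by blast
    then show False using free that by blast
  qed
  ultimately show ?thesis by blast
qed

end
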